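(* Let $M$ be a combinational Boolean circuit with set of internal variables $X$, set of input variables $V$ and set of output variables $W$, and let $F(X,V,W)$ be a CNF formula specifying $M$. Let $B(W)$ be a clause over variables of $W$, let $C \in F$ be a clause, and let $H(V)$ be a CNF formula over variables of $V$ such that $$\exists X\,\exists W\,[F \wedge B] \;\equiv\; H \wedge \exists X\,\exists W\,[(F \setminus \{C\}) \wedge B].$$ Let $Q(V)$ be a clause of $H$. Then for every full assignment $\mathbf{v}$ to $V$ that falsifies $Q$, the output assignment $\mathbf{w}$ produced by $M$ on input $\mathbf{v}$ falsifies the clause $B$.
   Context: A CNF formula is identified with the set of its clauses, so $F\setminus\{C\}$ is $F$ with clause $C$ removed. $F$ specifies $M$ means $F = F_{G_1}\wedge\dots\wedge F_{G_k}$, where $G_1,\dots,G_k$ are the gates of $M$ and $F_{G_i}$ is the standard (Tseitin) CNF encoding of gate $G_i$, so that the assignments to $X\cup V\cup W$ satisfying $F$ are exactly the consistent assignments to all gates of $M$, i.e., exactly the execution traces $(\mathbf{x},\mathbf{v},\mathbf{w})$ of $M$ (for each input $\mathbf{v}$ there is exactly one such trace). Two formulas possibly containing existential quantifiers are equivalent ($\equiv$) if they evaluate to the same value under every full assignment to their free variables. *)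

theory Defs
  imports Main
begin

type_synonym 'a lit = "'a \<times> bool"        (* (x, True) = x, (x, False) = \<not>x *)
type_synonym 'a clause = "'a lit set"
type_synonym 'a cnf = "'a clause set"
type_synonym 'a assignment = "'a \<Rightarrow> bool"

definition sat_lit :: "'a assignment \<Rightarrow> 'a lit \<Rightarrow> bool" where
  "sat_lit \<sigma> l \<longleftrightarrow> \<sigma> (fst l) = snd l"

definition sat_clause :: "'a assignment \<Rightarrow> 'a clause \<Rightarrow> bool" where
  "sat_clause \<sigma> C \<longleftrightarrow> (\<exists>l\<in>C. sat_lit \<sigma> l)"

definition sat_cnf :: "'a assignment \<Rightarrow> 'a cnf \<Rightarrow> bool" where
  "sat_cnf \<sigma> F \<longleftrightarrow> (\<forall>C\<in>F. sat_clause \<sigma> C)"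

definition vars_clause :: "'a clause \<Rightarrow> 'a set" where
  "vars_clause C = fst ` C"

definition vars_cnf :: "'a cnf \<Rightarrow> 'a set" where
  "vars_cnf F = (\<Union>C\<in>F. vars_clause C)"

definition agree_outside :: "'a set \<Rightarrow> 'a assignment \<Rightarrow> 'a assignment \<Rightarrow> bool" where
  "agree_outside Z \<sigma> \<tau> \<longleftrightarrow> (\<forall>x. x \<notin> Z \<longrightarrow> \<sigma> x = \<tau> x)"

(* Gates and combinational circuits.
   A gate is (output variable, list of input variables, Boolean function).
   A circuit is a list of gates in topological order. *)
type_synonym 'a gate = "'a \<times> 'a list \<times> (bool list \<Rightarrow> bool)"
type_synonym 'a circuit = "'a gate list"

definition gate_out :: "'a gate \<Rightarrow> 'a" where "gate_out g = fst g"
definition gate_ins :: "'a gate \<Rightarrow> 'a list" where "gate_ins g = fst (snd g)"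
definition gate_fun :: "'a gate \<Rightarrow> bool list \<Rightarrow> bool" where "gate_fun g = snd (snd g)"

definition gate_consistent :: "'a assignment \<Rightarrow> 'a gate \<Rightarrow> bool" where
  "gate_consistent \<sigma> g \<longleftrightarrow> \<sigma> (gate_out g) = gate_fun g (map \<sigma> (gate_ins g))"

fun topo_ok :: "'a set \<Rightarrow> 'a circuit \<Rightarrow> bool" where
  "topo_ok D [] = True"
| "topo_ok D (g # gs) \<longleftrightarrow> set (gate_ins g) \<subseteq> D \<and> gate_out g \<notin> D
      \<and> topo_ok (insert (gate_out g) D) gs"

definition circuit :: "'a circuit \<Rightarrow> 'a set \<Rightarrow> 'a set \<Rightarrow> 'a set \<Rightarrow> bool" where
  "circuit M X V W \<longleftrightarrow> topo_ok V M \<and> X \<inter> W = {}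
      \<and> set (map gate_out M) = X \<union> W"

fun run :: "'a circuit \<Rightarrow> 'a assignment \<Rightarrow> 'a assignment" where
  "run [] \<sigma> = \<sigma>"
| "run (g # gs) \<sigma> = run gs (\<sigma>(gate_out g := gate_fun g (map \<sigma> (gate_ins g))))"

definition encodes_gate :: "'a cnf \<Rightarrow> 'a gate \<Rightarrow> bool" where
  "encodes_gate E g \<longleftrightarrow> finite E \<and> (\<forall>C\<in>E. finite C)
     \<and> vars_cnf E \<subseteq> insert (gate_out g) (set (gate_ins g))
     \<and> (\<forall>\<sigma>. sat_cnf \<sigma> E \<longleftrightarrow> gate_consistent \<sigma> g)"

definition specifies :: "'a cnf \<Rightarrow> 'a circuit \<Rightarrow> bool" where
  "specifies F M \<longleftrightarrow> (\<exists>E. (\<forall>g\<in>set M. encodes_gate (E g) g) \<and> F = (\<Union>g\<in>set M. E g))"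

end

theory Submission
  imports Defs
begin

(* If the output assignment of M on v satisfied B, the execution trace of M on v would be a
   witness for the left-hand side of the equivalence, which forces v to satisfy H and hence Q. *)

lemma topo_ok_gate_out_notin:
  assumes "topo_ok D M" and "x \<in> D"
  shows "x \<notin> gate_out ` set M"
  using assms by (induction M arbitrary: D) auto

lemma run_eq_outside_gate_outs:
  assumes "x \<notin> gate_out ` set M"
  shows "run M \<sigma> x = \<sigma> x"
  using assms by (induction M arbitrary: \<sigma>) auto

lemma topo_ok_run_gate_consistent:
  assumes "topo_ok D M" and "g \<in> set M"
  shows "gate_consistent (run M \<sigma>) g"
  using assms
proof (induction M arbitrary: D \<sigma>)
  case Nil
  then show ?case by simp
next
  case (Cons h gs)
  define \<sigma>' where "\<sigma>' = \<sigma>(gate_out h := gate_fun h (map \<sigma> (gate_ins h)))"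
  have run_Cons: "run (h # gs) \<sigma> = run gs \<sigma>'"
    by (simp add: \<sigma>'_def)
  show ?case
  proof (cases "g = h")
    case True
    have ins: "set (gate_ins h) \<subseteq> D" and out: "gate_out h \<notin> D"
      and topo: "topo_ok (insert (gate_out h) D) gs"
      using Cons.prems(1) by auto
    \<comment> \<open>the later gates overwrite neither the output nor the inputs of h\<close>
    have kept: "run gs \<sigma>' x = \<sigma>' x" if "x \<in> insert (gate_out h) D" for x
      using topo_ok_gate_out_notin[OF topo that] run_eq_outside_gate_outs by metis
    have inputs_kept: "run gs \<sigma>' x = \<sigma> x" if "x \<in> set (gate_ins h)" for x
    proof -
      have "x \<in> D" and "x \<noteq> gate_out h"
        using that ins out by auto
      then show ?thesis
        using kept[of x] by (simp add: \<sigma>'_def)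
    qed
    have "map (run gs \<sigma>') (gate_ins h) = map \<sigma> (gate_ins h)"
      by (rule map_cong[OF refl inputs_kept])
    moreover have "run gs \<sigma>' (gate_out h) = gate_fun h (map \<sigma> (gate_ins h))"
      using kept[of "gate_out h"] by (simp add: \<sigma>'_def)
    ultimately show ?thesis
      using True run_Cons unfolding gate_consistent_def by metis
  next
    case False
    then show ?thesis
      using Cons run_Cons by auto
  qed
qed

lemma specifies_sat_cnf_run:
  assumes "specifies F M" and "topo_ok D M"
  shows "sat_cnf (run M \<sigma>) F"
proof -
  obtain E where E: "\<forall>g\<in>set M. encodes_gate (E g) g" and F: "F = (\<Union>g\<in>set M. E g)"
    using assms(1) by (auto simp: specifies_def)
  have "sat_cnf (run M \<sigma>) (E g)" if "g \<in> set M" for g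
    using E that topo_ok_run_gate_consistent[OF assms(2) that] by (auto simp: encodes_gate_def)
  then show ?thesis
    unfolding F sat_cnf_def by blast
qed

lemma circuit_agree_outside_run:
  assumes "circuit M X V W"
  shows "agree_outside (X \<union> W) \<sigma> (run M \<sigma>)"
proof -
  have "gate_out ` set M = X \<union> W"
    using assms by (simp add: circuit_def)
  then show ?thesis
    unfolding agree_outside_def using run_eq_outside_gate_outs by metis
qed

theorem proposition3:
  fixes M :: "'a circuit" and X V W :: "'a set"
    and F H :: "'a cnf" and B C Q :: "'a clause"
  assumes "circuit M X V W"
    and "specifies F M"
    and "vars_clause B \<subseteq> W"
    and "C \<in> F"
    and "finite H" and "\<forall>D\<in>H. finite D" and "vars_cnf H \<subseteq> V"
    and "\<forall>\<sigma>. (\<exists>\<tau>. agree_outside (X \<union> W) \<sigma> \<tau> \<and> sat_cnf \<tau> F \<and> sat_clause \<tau> B)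
             \<longleftrightarrow> (sat_cnf \<sigma> H \<and>
                  (\<exists>\<tau>. agree_outside (X \<union> W) \<sigma> \<tau> \<and> sat_cnf \<tau> (F - {C}) \<and> sat_clause \<tau> B))"
    and "Q \<in> H"
  shows "\<forall>v. \<not> sat_clause v Q \<longrightarrow> \<not> sat_clause (run M v) B"
proof (intro allI impI notI)
  fix v
  assume Q_false: "\<not> sat_clause v Q" and B_true: "sat_clause (run M v) B"
  have "agree_outside (X \<union> W) v (run M v)"
    using circuit_agree_outside_run[OF assms(1)] .
  moreover have "sat_cnf (run M v) F"
    using assms(1,2) specifies_sat_cnf_run by (auto simp: circuit_def)
  ultimately have "sat_cnf v H"
    using assms(8) B_true by blast
  then show False
    using Q_false assms(9) by (auto simp: sat_cnf_def)
qed

end
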